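(* Let $\{\mathcal{T}_n\}_{n\ge 2}$ be the two-type CMRT with parameters $p\in(0,1]$, $q\in[0,1]$, and for $k\ge 0$ let $N_k(n)$ be the number of vertices of out-degree $k$ in $\mathcal{T}_n$. Then for each fixed $k\ge 0$, $N_k(n)/n\to p_k$ in probability as $n\to\infty$, where $$p_k=\frac{p}{1+r_A^*}\left(\frac{r_A^*}{1+r_A^*}\right)^k+\frac{1-p}{1+r_B^*}\left(\frac{r_B^*}{1+r_B^*}\right)^k,\qquad r_A^*=q+\frac{(1-p)(1-q)}{p},\quad r_B^*=\frac{p(1-q)}{1-p}+q,$$ and when $p=1$ the second term of $p_k$ is interpreted as $0$.
   Context: Two-type Community Modulated Recursive Tree (CMRT) with parameters $p\in(0,1]$, $q\in[0,1]$: $\mathcal{T}_2$ consists of vertex $1$ of type $A$ and vertex $2$ of type $B$ joined by an edge (the roots of type $A$ and $B$). For $n\ge 3$, $\mathcal{T}_n$ is obtained from $\mathcal{T}_{n-1}$ by adding vertex $n$: (1) vertex $n$ is of type $A$ with probability $p$ and of type $B$ with probability $1-p$; (2) with probability $q$ it decides to connect to a vertex of its own type, and with probability $1-q$ to a vertex of the other type; (3) it connects by an edge to an existing vertex of the selected type chosen uniformly at random. All random choices are independent. Edges are viewed as directed from parent (the earlier vertex) to child; the out-degree of a vertex is its number of children. *)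

theory Defs
  imports "HOL-Probability.Probability"
begin

text \<open>A tree T_n is encoded as a list t of length n: entry t!(v-1) = (type, parent)
  describes vertex v (1-indexed). Type True = A, False = B. Parent 0 means "no parent"
  (only vertex 1, the root of type A).\<close>

type_synonym cmrt_tree = "(bool \<times> nat) list"

definition cmrt_init :: cmrt_tree where
  "cmrt_init = [(True, 0), (False, 1)]"

definition verts_of_type :: "cmrt_tree \<Rightarrow> bool \<Rightarrow> nat set" where
  "verts_of_type t ty = {v \<in> {1..length t}. fst (t ! (v - 1)) = ty}"

definition cmrt_step :: "real \<Rightarrow> real \<Rightarrow> cmrt_tree \<Rightarrow> cmrt_tree pmf" where
  "cmrt_step p q t =
     bind_pmf (bernoulli_pmf p) (\<lambda>a.
     bind_pmf (bernoulli_pmf q) (\<lambda>s.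
     bind_pmf (pmf_of_set (verts_of_type t (if s then a else \<not> a))) (\<lambda>v.
     return_pmf (t @ [(a, v)]))))"

text \<open>cmrt_aux p q m is the law of T_(m+2).\<close>
primrec cmrt_aux :: "real \<Rightarrow> real \<Rightarrow> nat \<Rightarrow> cmrt_tree pmf" where
  "cmrt_aux p q 0 = return_pmf cmrt_init"
| "cmrt_aux p q (Suc m) = bind_pmf (cmrt_aux p q m) (cmrt_step p q)"

text \<open>Law of T_n (n \<ge> 2; for n < 2 it is just T_2, irrelevant for the limit).\<close>
definition cmrt :: "real \<Rightarrow> real \<Rightarrow> nat \<Rightarrow> cmrt_tree pmf" where
  "cmrt p q n = cmrt_aux p q (n - 2)"

definition outdeg :: "cmrt_tree \<Rightarrow> nat \<Rightarrow> nat" where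
  "outdeg t v = card {j \<in> {1..length t}. snd (t ! (j - 1)) = v}"

definition Ndeg :: "cmrt_tree \<Rightarrow> nat \<Rightarrow> nat" where
  "Ndeg t k = card {v \<in> {1..length t}. outdeg t v = k}"

definition rA :: "real \<Rightarrow> real \<Rightarrow> real" where
  "rA p q = q + (1 - p) * (1 - q) / p"

definition rB :: "real \<Rightarrow> real \<Rightarrow> real" where
  "rB p q = p * (1 - q) / (1 - p) + q"

definition pk :: "real \<Rightarrow> real \<Rightarrow> nat \<Rightarrow> real" where
  "pk p q k = p / (1 + rA p q) * (rA p q / (1 + rA p q)) ^ k
     + (if p = 1 then 0 else (1 - p) / (1 + rB p q) * (rB p q / (1 + rB p q)) ^ k)"

end

theory Submission
  imports Defs
begin

text \<open>Fix a type, let \<pi> be the probability that a new vertex has this type and \<gamma> the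
  probability that it attaches to a vertex of this type. Among the N vertices of the type, the
  proportion of out-degree k should approach w_k = \<pi>/(\<pi>+\<gamma>) (\<gamma>/(\<pi>+\<gamma>))^k, the solution of
  (\<pi>+\<gamma>) w_k = \<pi> [k = 0] + \<gamma> w_(k-1); and pk is \<pi>_A w_k^A + \<pi>_B w_k^B.
  If X_k counts the vertices of the type with out-degree k, the discrepancy D_k = X_k - w_k N
  changes by at most 2 per step and its mean increment is \<gamma> (D_(k-1) - D_k)/N, so E[D_k^2]
  grows by at most 4 + E|D_(k-1)| per step. Induction on k gives E[D_k^2] = o(n^2), likewise
  E[(N - \<pi> n)^2] grows by at most 1 per step, and Chebyshev's inequality concludes.\<close>

lemma expectation_bind_pmf_finite:
  fixes f :: "'b \<Rightarrow> real"
  assumes "finite (set_pmf M)" "\<And>x. x \<in> set_pmf M \<Longrightarrow> finite (set_pmf (K x))"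
  shows "measure_pmf.expectation (bind_pmf M K) f =
    measure_pmf.expectation M (\<lambda>x. measure_pmf.expectation (K x) f)"
  using assms
  by (simp add: pmf_expectation_bind[OF assms(1)] integral_measure_pmf[OF assms(1)])

lemma expectation_bind_pmf_le:
  fixes f g :: "'b \<Rightarrow> real"
  assumes fin: "finite (set_pmf M)" "\<And>x. x \<in> set_pmf M \<Longrightarrow> finite (set_pmf (K x))"
    and le: "\<And>x. x \<in> set_pmf M \<Longrightarrow> measure_pmf.expectation (K x) f \<le> g x"
  shows "measure_pmf.expectation (bind_pmf M K) f \<le> measure_pmf.expectation M g"
proof -
  have "measure_pmf.expectation (bind_pmf M K) f = measure_pmf.expectation M (\<lambda>x. measure_pmf.expectation (K x) f)"
    by (rule expectation_bind_pmf_finite[OF fin])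
  also have "\<dots> \<le> measure_pmf.expectation M g"
    using fin(1) le
    by (intro integral_mono_AE) (auto simp: AE_measure_pmf_iff integrable_measure_pmf_finite)
  finally show ?thesis .
qed

lemma abs_le_power2_div_add:
  fixes x c :: real
  assumes "0 < c"
  shows "\<bar>x\<bar> \<le> x\<^sup>2 / c + c / 4"
proof -
  have "0 \<le> (\<bar>x\<bar> - c / 2)\<^sup>2"
    by simp
  then have "c * \<bar>x\<bar> \<le> x\<^sup>2 + c\<^sup>2 / 4"
    by (simp add: power2_eq_square algebra_simps)
  then show ?thesis
    using assms by (simp add: field_simps power2_eq_square)
qed

lemma power2_add_le:
  fixes x d b :: real
  assumes "\<bar>d\<bar> \<le> b"
  shows "(x + d)\<^sup>2 \<le> x\<^sup>2 + b\<^sup>2 + 2 * x * d"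
proof -
  have "d\<^sup>2 \<le> b\<^sup>2"
    using assms by (metis abs_ge_zero abs_le_square_iff abs_of_nonneg order_trans)
  then show ?thesis
    by (simp add: power2_eq_square algebra_simps)
qed

lemma power2_sum4_le:
  fixes a b c d :: real
  shows "(a + b + c + d)\<^sup>2 \<le> 4 * (a\<^sup>2 + b\<^sup>2 + c\<^sup>2 + d\<^sup>2)"
proof -
  have "0 \<le> (a - b)\<^sup>2 + (a - c)\<^sup>2 + (a - d)\<^sup>2 + (b - c)\<^sup>2 + (b - d)\<^sup>2 + (c - d)\<^sup>2"
    by simp
  then show ?thesis
    by (simp add: power2_eq_square algebra_simps)
qed

lemma eventually_le_mult_real:
  fixes c \<epsilon> :: real
  assumes "0 < \<epsilon>"
  shows "eventually (\<lambda>m. c \<le> \<epsilon> * real m) sequentially"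
  using filterlim_tendsto_pos_mult_at_top[OF tendsto_const assms filterlim_real_sequentially]
  unfolding filterlim_at_top by blast

lemma eventually_le_mult_sq_of_increments:
  fixes e g :: "nat \<Rightarrow> real"
  assumes increment: "\<And>m. e (Suc m) \<le> e m + g m"
    and increment_small: "\<And>\<epsilon>. 0 < \<epsilon> \<Longrightarrow> eventually (\<lambda>m. g m \<le> \<epsilon> * real m) sequentially"
    and "0 < \<epsilon>"
  shows "eventually (\<lambda>m. e m \<le> \<epsilon> * (real m)\<^sup>2) sequentially"
proof -
  obtain N where N: "\<And>m. N \<le> m \<Longrightarrow> g m \<le> \<epsilon> / 2 * real m"
    using increment_small[of "\<epsilon> / 2"] \<open>0 < \<epsilon>\<close> by (auto simp: eventually_sequentially)
  have partial_sum: "e m \<le> e N + \<epsilon> / 2 * (real m)\<^sup>2" if "N \<le> m" for m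
    using that
  proof (induction m rule: dec_induct)
    case base
    then show ?case
      using \<open>0 < \<epsilon>\<close> by simp
  next
    case (step m)
    have "e (Suc m) \<le> e N + \<epsilon> / 2 * (real m)\<^sup>2 + \<epsilon> / 2 * real m"
      using increment[of m] step N[of m] by linarith
    also have "\<dots> \<le> e N + \<epsilon> / 2 * (real (Suc m))\<^sup>2"
      using \<open>0 < \<epsilon>\<close> by (simp add: power2_eq_square algebra_simps)
    finally show ?case .
  qed
  have "eventually (\<lambda>m. e N \<le> \<epsilon> / 2 * real m) sequentially"
    using eventually_le_mult_real \<open>0 < \<epsilon>\<close> by simp
  moreover have "eventually (\<lambda>m. N \<le> m) sequentially" "eventually (\<lambda>m. 1 \<le> m) sequentially"
    by (rule eventually_ge_at_top)+
  ultimately show ?thesis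
  proof eventually_elim
    case (elim m)
    then have "\<epsilon> / 2 * real m \<le> \<epsilon> / 2 * (real m)\<^sup>2"
      using \<open>0 < \<epsilon>\<close> by (intro mult_left_mono) (auto simp: power2_eq_square)
    then show ?case
      using elim partial_sum[of m] by linarith
  qed
qed

lemma eventually_expectation_abs_le:
  fixes M :: "nat \<Rightarrow> 'a pmf" and X :: "'a \<Rightarrow> real"
  assumes fin: "\<And>m. finite (set_pmf (M m))"
    and sq_small: "\<And>\<epsilon>. 0 < \<epsilon> \<Longrightarrow>
      eventually (\<lambda>m. measure_pmf.expectation (M m) (\<lambda>x. (X x)\<^sup>2) \<le> \<epsilon> * (real m)\<^sup>2) sequentially"
    and "0 < \<epsilon>"
  shows "eventually (\<lambda>m. measure_pmf.expectation (M m) (\<lambda>x. \<bar>X x\<bar>) \<le> \<epsilon> * real m) sequentially"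
proof -
  define \<delta> where "\<delta> = \<epsilon> / 2"
  have "0 < \<delta>"
    using \<open>0 < \<epsilon>\<close> by (simp add: \<delta>_def)
  have "eventually (\<lambda>m. measure_pmf.expectation (M m) (\<lambda>x. (X x)\<^sup>2) \<le> \<delta>\<^sup>2 * (real m)\<^sup>2) sequentially"
    using sq_small \<open>0 < \<delta>\<close> by simp
  moreover have "eventually (\<lambda>m. 1 \<le> m) sequentially"
    by (rule eventually_ge_at_top)
  ultimately show ?thesis
  proof eventually_elim
    case (elim m)
    have pos: "0 < \<delta> * real m"
      using elim \<open>0 < \<delta>\<close> by simp
    have "measure_pmf.expectation (M m) (\<lambda>x. \<bar>X x\<bar>)
        \<le> measure_pmf.expectation (M m) (\<lambda>x. (X x)\<^sup>2 / (\<delta> * real m) + \<delta> * real m / 4)"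
      using fin abs_le_power2_div_add[OF pos]
      by (intro integral_mono) (auto simp: integrable_measure_pmf_finite)
    also have "\<dots> = measure_pmf.expectation (M m) (\<lambda>x. (X x)\<^sup>2) / (\<delta> * real m) + \<delta> * real m / 4"
      using fin by (simp add: integrable_measure_pmf_finite)
    also have "\<dots> \<le> \<delta> * real m + \<delta> * real m / 4"
      using elim pos by (simp add: field_simps power2_eq_square)
    also have "\<dots> \<le> \<epsilon> * real m"
      using pos by (simp add: \<delta>_def)
    finally show ?case .
  qed
qed

lemma prob_deviation_le_second_moment:
  fixes M :: "'a pmf" and X :: "'a \<Rightarrow> real" and a n \<epsilon> :: real
  assumes "integrable M (\<lambda>x. (X x - a * n)\<^sup>2)" "0 < \<epsilon>" "0 < n"
  shows "measure_pmf.prob M {x. \<bar>X x / n - a\<bar> > \<epsilon>}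
    \<le> measure_pmf.expectation M (\<lambda>x. (X x - a * n)\<^sup>2) / (\<epsilon> * n)\<^sup>2"
proof -
  have "{x. \<bar>X x / n - a\<bar> > \<epsilon>} \<subseteq> {x \<in> space M. (\<epsilon> * n)\<^sup>2 \<le> (X x - a * n)\<^sup>2}"
  proof
    fix x
    assume "x \<in> {x. \<bar>X x / n - a\<bar> > \<epsilon>}"
    moreover have "X x / n - a = (X x - a * n) / n"
      using \<open>0 < n\<close> by (simp add: field_simps)
    ultimately have "\<epsilon> * n \<le> \<bar>X x - a * n\<bar>"
      using \<open>0 < n\<close> by (simp add: pos_less_divide_eq abs_divide)
    then have "(\<epsilon> * n)\<^sup>2 \<le> \<bar>X x - a * n\<bar>\<^sup>2"
      using assms by (intro power_mono) auto
    then show "x \<in> {x \<in> space M. (\<epsilon> * n)\<^sup>2 \<le> (X x - a * n)\<^sup>2}"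
      by simp
  qed
  then have "measure_pmf.prob M {x. \<bar>X x / n - a\<bar> > \<epsilon>}
      \<le> measure_pmf.prob M {x \<in> space M. (\<epsilon> * n)\<^sup>2 \<le> (X x - a * n)\<^sup>2}"
    by (intro measure_pmf.finite_measure_mono) simp_all
  also have "\<dots> \<le> measure_pmf.expectation M (\<lambda>x. (X x - a * n)\<^sup>2) / (\<epsilon> * n)\<^sup>2"
    using assms by (intro integral_Markov_inequality_measure) auto
  finally show ?thesis .
qed

lemma tendsto_prob_deviation_zero:
  fixes M :: "nat \<Rightarrow> 'a pmf" and X :: "'a \<Rightarrow> real" and a \<epsilon> :: real
  assumes integrable: "\<And>n. integrable (M n) (\<lambda>x. (X x - a * real n)\<^sup>2)"
    and second_moment_small: "\<And>\<eta>. 0 < \<eta> \<Longrightarrow>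
      eventually (\<lambda>n. measure_pmf.expectation (M n) (\<lambda>x. (X x - a * real n)\<^sup>2) \<le> \<eta> * (real n)\<^sup>2) sequentially"
    and "0 < \<epsilon>"
  shows "((\<lambda>n. measure_pmf.prob (M n) {x. \<bar>X x / real n - a\<bar> > \<epsilon>}) \<longlongrightarrow> 0) at_top"
proof (rule order_tendstoI)
  fix r :: real
  assume "r < 0"
  then show "eventually (\<lambda>n. r < measure_pmf.prob (M n) {x. \<bar>X x / real n - a\<bar> > \<epsilon>}) at_top"
    by (simp add: less_le_trans)
next
  fix r :: real
  assume "0 < r"
  define \<eta> where "\<eta> = r * \<epsilon>\<^sup>2 / 2"
  have "0 < \<eta>"
    using \<open>0 < r\<close> \<open>0 < \<epsilon>\<close> by (simp add: \<eta>_def)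
  have "eventually (\<lambda>n. measure_pmf.expectation (M n) (\<lambda>x. (X x - a * real n)\<^sup>2) \<le> \<eta> * (real n)\<^sup>2) sequentially"
    by (rule second_moment_small[OF \<open>0 < \<eta>\<close>])
  moreover have "eventually (\<lambda>n. 1 \<le> n) sequentially"
    by (rule eventually_ge_at_top)
  ultimately show "eventually (\<lambda>n. measure_pmf.prob (M n) {x. \<bar>X x / real n - a\<bar> > \<epsilon>} < r) at_top"
  proof eventually_elim
    case (elim n)
    then have "0 < (\<epsilon> * real n)\<^sup>2"
      using \<open>0 < \<epsilon>\<close> by simp
    have "measure_pmf.prob (M n) {x. \<bar>X x / real n - a\<bar> > \<epsilon>}
        \<le> measure_pmf.expectation (M n) (\<lambda>x. (X x - a * real n)\<^sup>2) / (\<epsilon> * real n)\<^sup>2"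
      using elim integrable \<open>0 < \<epsilon>\<close> by (intro prob_deviation_le_second_moment) auto
    also have "\<dots> \<le> \<eta> * (real n)\<^sup>2 / (\<epsilon> * real n)\<^sup>2"
      using elim \<open>0 < (\<epsilon> * real n)\<^sup>2\<close> by (simp add: divide_right_mono)
    also have "\<dots> = r / 2"
      using elim \<open>0 < \<epsilon>\<close> by (simp add: \<eta>_def power_mult_distrib)
    finally show ?case
      using \<open>0 < r\<close> by simp
  qed
qed

section \<open>Trees in the support of the process\<close>

definition cmrt_tree_wf :: "cmrt_tree \<Rightarrow> bool" where
  "cmrt_tree_wf t \<longleftrightarrow> 2 \<le> length t \<and> fst (t ! 0) \<and> \<not> fst (t ! 1) \<and>
     (\<forall>j\<in>{1..length t}. snd (t ! (j - 1)) < j)"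

lemma outdeg_snoc:
  "outdeg (t @ [(a, v)]) w = outdeg t w + (if v = w then 1 else 0)"
proof -
  have children: "{j \<in> {1..length (t @ [(a, v)])}. snd ((t @ [(a, v)]) ! (j - 1)) = w}
      = {j \<in> {1..length t}. snd (t ! (j - 1)) = w} \<union> (if v = w then {Suc (length t)} else {})"
    by (auto simp: nth_append split: if_splits)
  show ?thesis
    unfolding outdeg_def children by (subst card_Un_disjoint) auto
qed

lemma outdeg_eq_0_if_gt_length:
  assumes "cmrt_tree_wf t" "length t < w"
  shows "outdeg t w = 0"
proof -
  have "{j \<in> {1..length t}. snd (t ! (j - 1)) = w} = {}"
    using assms unfolding cmrt_tree_wf_def by fastforce
  then show ?thesis
    unfolding outdeg_def by simp
qed

lemma verts_of_type_subset: "verts_of_type t ty \<subseteq> {1..length t}"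
  unfolding verts_of_type_def by auto

lemma finite_verts_of_type [simp]: "finite (verts_of_type t ty)"
  using verts_of_type_subset finite_subset by blast

lemma verts_of_type_nonempty:
  assumes "cmrt_tree_wf t"
  shows "verts_of_type t ty \<noteq> {}"
proof -
  have "(if ty then 1 else 2) \<in> verts_of_type t ty"
    using assms unfolding cmrt_tree_wf_def verts_of_type_def by auto
  then show ?thesis by blast
qed

lemma set_pmf_cmrt_step_subset:
  assumes "cmrt_tree_wf t"
  shows "set_pmf (cmrt_step p q t) \<subseteq> (\<lambda>(a, v). t @ [(a, v)]) ` (UNIV \<times> {1..length t})"
  using verts_of_type_subset verts_of_type_nonempty[OF assms]
  by (fastforce simp: cmrt_step_def)

lemma finite_set_pmf_cmrt_step:
  assumes "cmrt_tree_wf t"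
  shows "finite (set_pmf (cmrt_step p q t))"
  using set_pmf_cmrt_step_subset[OF assms] by (rule finite_subset) simp

lemma cmrt_tree_wf_snoc:
  assumes "cmrt_tree_wf t" "v \<le> length t"
  shows "cmrt_tree_wf (t @ [(a, v)])"
  using assms unfolding cmrt_tree_wf_def
  by (auto simp: nth_append less_Suc_eq_le le_Suc_eq)

lemma cmrt_aux_support:
  "finite (set_pmf (cmrt_aux p q m)) \<and>
   (\<forall>t\<in>set_pmf (cmrt_aux p q m). cmrt_tree_wf t \<and> length t = m + 2)"
proof (induction m)
  case 0
  have "cmrt_tree_wf cmrt_init"
    by (auto simp: cmrt_tree_wf_def cmrt_init_def numeral_2_eq_2 le_Suc_eq)
  then show ?case
    by (simp add: cmrt_init_def)
next
  case (Suc m)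
  have step_support: "finite (set_pmf (cmrt_step p q t)) \<and>
      (\<forall>t'\<in>set_pmf (cmrt_step p q t). cmrt_tree_wf t' \<and> length t' = m + 3)"
    if "t \<in> set_pmf (cmrt_aux p q m)" for t
  proof -
    have "cmrt_tree_wf t" "length t = m + 2"
      using Suc that by auto
    then show ?thesis
      using set_pmf_cmrt_step_subset[of t p q] finite_set_pmf_cmrt_step[of t p q]
      by (fastforce intro: cmrt_tree_wf_snoc)
  qed
  show ?case
    using Suc step_support by auto
qed

lemma finite_set_pmf_cmrt_aux: "finite (set_pmf (cmrt_aux p q m))"
  using cmrt_aux_support by blast

lemma cmrt_aux_wf_length: "t \<in> set_pmf (cmrt_aux p q m) \<Longrightarrow> cmrt_tree_wf t \<and> length t = m + 2"
  using cmrt_aux_support by blast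

lemma integrable_cmrt_aux: "integrable (measure_pmf (cmrt_aux p q m)) (f :: cmrt_tree \<Rightarrow> real)"
  by (rule integrable_measure_pmf_finite) (simp add: finite_set_pmf_cmrt_aux)

definition count_type :: "cmrt_tree \<Rightarrow> bool \<Rightarrow> (nat \<Rightarrow> bool) \<Rightarrow> real" where
  "count_type t ty P =
     (\<Sum>v\<in>{1..length t}. if fst (t ! (v - 1)) = ty \<and> P (outdeg t v) then 1 else 0)"

lemma sum_verts_of_type:
  "(\<Sum>v\<in>verts_of_type t ty. g v) = (\<Sum>v\<in>{1..length t}. if fst (t ! (v - 1)) = ty then g v else 0)"
  unfolding verts_of_type_def by (rule sum.inter_filter) simp

lemma sum_verts_of_type_indicator:
  "(\<Sum>v\<in>verts_of_type t ty. if P (outdeg t v) then 1 else 0) = count_type t ty P"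
  unfolding sum_verts_of_type count_type_def by (rule sum.cong) auto

lemma card_verts_of_type: "real (card (verts_of_type t ty)) = count_type t ty (\<lambda>_. True)"
  using sum_verts_of_type_indicator[where P = "\<lambda>_. True"] by simp

lemma count_type_nonneg: "0 \<le> count_type t ty P"
  unfolding count_type_def by (auto intro: sum_nonneg)

lemma count_type_le: "count_type t ty P \<le> count_type t ty (\<lambda>_. True)"
  unfolding count_type_def by (auto intro: sum_mono)

lemma count_type_pos: "cmrt_tree_wf t \<Longrightarrow> 0 < count_type t ty (\<lambda>_. True)"
  using verts_of_type_nonempty[of t ty] by (simp add: card_verts_of_type[symmetric] card_gt_0_iff)

lemma count_type_snoc:
  assumes wf: "cmrt_tree_wf t" and v: "v \<in> {1..length t}"
  shows "count_type (t @ [(a, v)]) ty P = count_type t ty P + (if a = ty \<and> P 0 then 1 else 0)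
     + (if fst (t ! (v - 1)) = ty
        then (if P (Suc (outdeg t v)) then 1 else 0) - (if P (outdeg t v) then 1 else 0) else 0)"
    (is "_ = _ + ?new + ?delta")
proof -
  define f where "f t' w = (if fst (t' ! (w - 1)) = ty \<and> P (outdeg t' w) then 1 else (0::real))"
    for t' w
  have old: "f (t @ [(a, v)]) w = f t w + (if w = v then ?delta else 0)" if "w \<in> {1..length t}" for w
    using that by (auto simp: f_def nth_append outdeg_snoc)
  have new: "f (t @ [(a, v)]) (Suc (length t)) = ?new"
    using outdeg_eq_0_if_gt_length[OF wf, of "Suc (length t)"] v
    by (simp add: f_def nth_append outdeg_snoc)
  have count_eq: "count_type t' ty P = (\<Sum>w\<in>{1..length t'}. f t' w)" for t'
    by (simp add: count_type_def f_def)
  have "count_type (t @ [(a, v)]) ty P = (\<Sum>w\<in>{1..length t}. f (t @ [(a, v)]) w) + ?new"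
    unfolding count_eq using new by simp
  also have "\<dots> = count_type t ty P + ?delta + ?new"
    using v by (simp add: old sum.distrib count_eq)
  finally show ?thesis
    by simp
qed

lemma Ndeg_eq_count_type: "real (Ndeg t k) = count_type t True (\<lambda>d. d = k) + count_type t False (\<lambda>d. d = k)"
proof -
  have "real (Ndeg t k) = (\<Sum>v\<in>{1..length t}. if outdeg t v = k then 1 else 0)"
    unfolding Ndeg_def by (simp add: sum.inter_filter[symmetric])
  also have "\<dots> = count_type t True (\<lambda>d. d = k) + count_type t False (\<lambda>d. d = k)"
    unfolding count_type_def sum.distrib[symmetric] by (rule sum.cong) auto
  finally show ?thesis .
qed

lemma length_eq_count_type: "real (length t) = count_type t True (\<lambda>_. True) + count_type t False (\<lambda>_. True)"
proof -
  have "real (length t) = (\<Sum>v\<in>{1..length t}. 1)"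
    by simp
  also have "\<dots> = count_type t True (\<lambda>_. True) + count_type t False (\<lambda>_. True)"
    unfolding count_type_def sum.distrib[symmetric] by (rule sum.cong) auto
  finally show ?thesis .
qed

section \<open>Drift of the discrepancies\<close>

definition type_prob :: "real \<Rightarrow> bool \<Rightarrow> real" where
  "type_prob p ty = (if ty then p else 1 - p)"

definition attach_prob :: "real \<Rightarrow> real \<Rightarrow> bool \<Rightarrow> real" where
  "attach_prob p q ty = type_prob p ty * q + type_prob p (\<not> ty) * (1 - q)"

text \<open>When \<pi> + \<gamma> = 0 (a type that never occurs and never receives children) the division by
  zero makes all weights 0, which keeps the recurrence below valid.\<close>

definition limit_weight :: "real \<Rightarrow> real \<Rightarrow> bool \<Rightarrow> nat \<Rightarrow> real" where
  "limit_weight p q ty k =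
     type_prob p ty / (type_prob p ty + attach_prob p q ty)
       * (attach_prob p q ty / (type_prob p ty + attach_prob p q ty)) ^ k"

definition outdeg_discrepancy :: "real \<Rightarrow> real \<Rightarrow> bool \<Rightarrow> nat \<Rightarrow> cmrt_tree \<Rightarrow> real" where
  "outdeg_discrepancy p q ty k t =
     count_type t ty (\<lambda>d. d = k) - limit_weight p q ty k * count_type t ty (\<lambda>_. True)"

definition type_discrepancy :: "real \<Rightarrow> bool \<Rightarrow> cmrt_tree \<Rightarrow> real" where
  "type_discrepancy p ty t = count_type t ty (\<lambda>_. True) - type_prob p ty * length t"

lemma outdeg_discrepancy_snoc:
  assumes wf: "cmrt_tree_wf t" and v: "v \<in> verts_of_type t b"
  shows "outdeg_discrepancy p q ty k (t @ [(a, v)]) = outdeg_discrepancy p q ty k t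
    + ((if a = ty then (if k = 0 then 1 else 0) - limit_weight p q ty k else 0)
      + (if b = ty then (if Suc (outdeg t v) = k then 1 else 0) - (if outdeg t v = k then 1 else 0) else 0))"
proof -
  have v_range: "v \<in> {1..length t}" and v_type: "fst (t ! (v - 1)) = b"
    using v unfolding verts_of_type_def by auto
  show ?thesis
    unfolding outdeg_discrepancy_def count_type_snoc[OF wf v_range] v_type
    by (auto simp: algebra_simps)
qed

lemma type_discrepancy_snoc:
  assumes wf: "cmrt_tree_wf t" and v: "v \<in> {1..length t}"
  shows "type_discrepancy p ty (t @ [(a, v)])
    = type_discrepancy p ty t + ((if a = ty then 1 else 0) - type_prob p ty)"
  unfolding type_discrepancy_def count_type_snoc[OF wf v]
  by (auto simp: algebra_simps)

text \<open>Applied with X, X' the numbers of vertices of out-degree k and k - 1 among the N vertices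
  of a type, w, w' their limiting proportions, c = [k = 0], a = \<pi> and g = \<gamma>: the second
  factor is then the mean increment of D = X - w N.\<close>

lemma discrepancy_drift_le:
  fixes N X X' w w' c a g :: real
  assumes "0 < N" "0 \<le> X'" "X' \<le> N" "0 \<le> w'" "w' \<le> 1" "0 \<le> g" "g \<le> 1"
    and fixed_point: "(a + g) * w = a * c + g * w'"
  shows "2 * (X - w * N) * (a * (c - w) + g * ((X' - X) / N)) \<le> \<bar>X' - w' * N\<bar>"
proof -
  define D D' where "D = X - w * N" and "D' = X' - w' * N"
  have "a * c = a * w + g * w - g * w'"
    using fixed_point by (simp add: algebra_simps)
  then have drift: "a * (c - w) + g * ((X' - X) / N) = g * (D' - D) / N"
    using assms(1) by (simp add: D_def D'_def right_diff_distrib add_divide_distrib diff_divide_distrib)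
  have cross: "2 * D * (D' - D) \<le> D'\<^sup>2 / 2"
    using sum_squares_ge_zero[of "D - D' / 2" 0] by (simp add: power2_eq_square algebra_simps)
  have "0 \<le> w' * N" "w' * N \<le> N"
    using assms mult_right_mono[of w' 1 N] by simp_all
  then have "\<bar>D'\<bar> \<le> N"
    using assms unfolding D'_def abs_le_iff by linarith
  then have "D'\<^sup>2 \<le> N * \<bar>D'\<bar>"
    by (metis abs_ge_zero mult_right_mono power2_abs power2_eq_square)
  moreover have "0 \<le> N * \<bar>D'\<bar>"
    using assms(1) by simp
  ultimately have "D'\<^sup>2 \<le> N * (\<bar>D'\<bar> * 2)"
    by linarith
  then have D'_sq_le: "D'\<^sup>2 / 2 / N \<le> \<bar>D'\<bar>"
    using assms(1) by (simp add: field_simps)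
  have "2 * D * (g * (D' - D) / N) = g * (2 * D * (D' - D)) / N"
    by simp
  also have "\<dots> \<le> g * (D'\<^sup>2 / 2) / N"
    using cross assms by (intro divide_right_mono mult_left_mono) auto
  also have "\<dots> \<le> D'\<^sup>2 / 2 / N"
    using assms by (intro divide_right_mono mult_left_le_one_le) auto
  also note D'_sq_le
  finally show ?thesis
    unfolding drift D_def D'_def .
qed

context
  fixes p q :: real
  assumes pq: "0 \<le> p" "p \<le> 1" "0 \<le> q" "q \<le> 1"
begin

lemma type_prob_bounds: "0 \<le> type_prob p ty" "type_prob p ty \<le> 1"
  using pq unfolding type_prob_def by auto

lemma attach_prob_bounds: "0 \<le> attach_prob p q ty" "attach_prob p q ty \<le> 1"
proof -
  have "attach_prob p q ty \<le> type_prob p ty * 1 + type_prob p (\<not> ty) * 1"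
    unfolding attach_prob_def using pq type_prob_bounds
    by (intro add_mono mult_left_mono) auto
  then show "attach_prob p q ty \<le> 1"
    by (cases ty) (simp_all add: type_prob_def)
  show "0 \<le> attach_prob p q ty"
    unfolding attach_prob_def using pq type_prob_bounds by simp
qed

lemma limit_weight_bounds: "0 \<le> limit_weight p q ty k" "limit_weight p q ty k \<le> 1"
proof -
  note bounds = type_prob_bounds[of ty] attach_prob_bounds[of ty]
  let ?s = "type_prob p ty + attach_prob p q ty"
  have "type_prob p ty / ?s \<le> 1" "attach_prob p q ty / ?s \<le> 1"
    using bounds by (cases "?s = 0"; simp add: divide_le_eq_1)+
  then show "limit_weight p q ty k \<le> 1"
    unfolding limit_weight_def using bounds by (intro mult_le_one power_le_one) auto
  show "0 \<le> limit_weight p q ty k"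
    unfolding limit_weight_def using bounds by simp
qed

lemma limit_weight_recurrence:
  "(type_prob p ty + attach_prob p q ty) * limit_weight p q ty k =
     type_prob p ty * (if k = 0 then 1 else 0)
       + attach_prob p q ty * (if k = 0 then 0 else limit_weight p q ty (k - 1))"
proof (cases "type_prob p ty + attach_prob p q ty = 0")
  case True
  then have "type_prob p ty = 0" "attach_prob p q ty = 0"
    using type_prob_bounds[of ty] attach_prob_bounds[of ty] by linarith+
  then show ?thesis
    by (simp add: limit_weight_def)
next
  case False
  show ?thesis
  proof (cases k)
    case (Suc j)
    define s where "s = type_prob p ty + attach_prob p q ty"
    have "s * (type_prob p ty / s * (attach_prob p q ty / s) ^ Suc j)
        = type_prob p ty * (attach_prob p q ty / s) ^ Suc j"
      using False by (simp add: s_def)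
    also have "\<dots> = attach_prob p q ty * (type_prob p ty / s * (attach_prob p q ty / s) ^ j)"
      using False by (simp add: s_def field_simps)
    finally show ?thesis
      using Suc unfolding limit_weight_def s_def by simp
  qed (use False in \<open>simp add: limit_weight_def\<close>)
qed

lemma outdeg_discrepancy_drift_le:
  assumes wf: "cmrt_tree_wf t"
  shows "2 * outdeg_discrepancy p q ty k t * (type_prob p ty * ((if k = 0 then 1 else 0) - limit_weight p q ty k)
      + attach_prob p q ty * ((count_type t ty (\<lambda>d. Suc d = k) - count_type t ty (\<lambda>d. d = k))
        / count_type t ty (\<lambda>_. True)))
    \<le> (if k = 0 then 0 else \<bar>outdeg_discrepancy p q ty (k - 1) t\<bar>)"
proof -
  define w' where "w' = (if k = 0 then 0 else limit_weight p q ty (k - 1))"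
  have "\<bar>count_type t ty (\<lambda>d. Suc d = k) - w' * count_type t ty (\<lambda>_. True)\<bar>
      = (if k = 0 then 0 else \<bar>outdeg_discrepancy p q ty (k - 1) t\<bar>)"
    unfolding w'_def by (cases k) (simp_all add: count_type_def outdeg_discrepancy_def)
  moreover have "2 * outdeg_discrepancy p q ty k t * (type_prob p ty * ((if k = 0 then 1 else 0) - limit_weight p q ty k)
      + attach_prob p q ty * ((count_type t ty (\<lambda>d. Suc d = k) - count_type t ty (\<lambda>d. d = k))
        / count_type t ty (\<lambda>_. True)))
    \<le> \<bar>count_type t ty (\<lambda>d. Suc d = k) - w' * count_type t ty (\<lambda>_. True)\<bar>"
    unfolding outdeg_discrepancy_def
    by (rule discrepancy_drift_le)
      (use count_type_pos[OF wf] count_type_nonneg count_type_le attach_prob_bounds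
        limit_weight_recurrence limit_weight_bounds in \<open>auto simp: w'_def\<close>)
  ultimately show ?thesis
    by simp
qed

lemma expectation_cmrt_step:
  fixes h :: "cmrt_tree \<Rightarrow> real"
  assumes "cmrt_tree_wf t"
  shows "measure_pmf.expectation (cmrt_step p q t) h =
    (\<Sum>a\<in>UNIV. type_prob p a * (\<Sum>s\<in>UNIV. (if s then q else 1 - q) *
       ((\<Sum>v\<in>verts_of_type t (if s then a else \<not> a). h (t @ [(a, v)])) /
          card (verts_of_type t (if s then a else \<not> a)))))"
proof -
  have "finite (set_pmf (M :: bool pmf))" for M
    by (rule finite_subset[of _ UNIV]) auto
  then show ?thesis
    using pq verts_of_type_nonempty[OF assms]
    by (simp add: cmrt_step_def expectation_bind_pmf_finite integral_pmf_of_set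
        UNIV_bool type_prob_def algebra_simps)
qed

lemma expectation_cmrt_step_le:
  fixes h :: "cmrt_tree \<Rightarrow> real"
  assumes wf: "cmrt_tree_wf t"
    and h_le: "\<And>a b v. v \<in> verts_of_type t b \<Longrightarrow>
      h (t @ [(a, v)]) \<le> c + f a + (if b = ty then g v else 0)"
  shows "measure_pmf.expectation (cmrt_step p q t) h \<le>
     c + (type_prob p True * f True + type_prob p False * f False)
       + attach_prob p q ty * ((\<Sum>v\<in>verts_of_type t ty. g v) / card (verts_of_type t ty))"
proof -
  define avg where "avg a b = (\<Sum>v\<in>verts_of_type t b. h (t @ [(a, v)])) / card (verts_of_type t b)"
    for a b
  define G where "G = (\<Sum>v\<in>verts_of_type t ty. g v) / card (verts_of_type t ty)"
  have avg_le: "avg a b \<le> c + f a + (if b = ty then G else 0)" for a b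
  proof -
    have card_pos: "real (card (verts_of_type t b)) > 0"
      using verts_of_type_nonempty[OF wf] by (simp add: card_gt_0_iff)
    have "(\<Sum>v\<in>verts_of_type t b. h (t @ [(a, v)]))
        \<le> (\<Sum>v\<in>verts_of_type t b. c + f a + (if b = ty then g v else 0))"
      by (rule sum_mono) (rule h_le)
    also have "\<dots> = card (verts_of_type t b) * (c + f a) + (if b = ty then G else 0) * card (verts_of_type t b)"
      using card_pos by (simp add: sum.distrib G_def)
    finally show ?thesis
      unfolding avg_def using card_pos by (simp add: pos_divide_le_eq algebra_simps)
  qed
  have weights_nonneg: "0 \<le> type_prob p a" "0 \<le> (if s then q else 1 - q)" for a s
    using pq by (auto simp: type_prob_def)
  have "measure_pmf.expectation (cmrt_step p q t) h =
      (\<Sum>a\<in>UNIV. type_prob p a * (\<Sum>s\<in>UNIV. (if s then q else 1 - q) * avg a (if s then a else \<not> a)))"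
    unfolding avg_def by (rule expectation_cmrt_step[OF wf])
  also have "\<dots> \<le> (\<Sum>a\<in>UNIV. type_prob p a * (\<Sum>s\<in>UNIV. (if s then q else 1 - q) *
      (c + f a + (if (if s then a else \<not> a) = ty then G else 0))))"
    by (intro sum_mono mult_left_mono weights_nonneg avg_le)
  also have "\<dots> = c + (type_prob p True * f True + type_prob p False * f False) + attach_prob p q ty * G"
    by (cases ty) (simp_all add: UNIV_bool attach_prob_def type_prob_def algebra_simps)
  finally show ?thesis
    unfolding G_def .
qed

lemma expectation_outdeg_discrepancy_sq_step:
  assumes wf: "cmrt_tree_wf t"
  shows "measure_pmf.expectation (cmrt_step p q t) (\<lambda>t'. (outdeg_discrepancy p q ty k t')\<^sup>2)
    \<le> (outdeg_discrepancy p q ty k t)\<^sup>2 + 4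
       + (if k = 0 then 0 else \<bar>outdeg_discrepancy p q ty (k - 1) t\<bar>)"
proof -
  define D where "D = outdeg_discrepancy p q ty k t"
  define w where "w = limit_weight p q ty k"
  define c :: real where "c = (if k = 0 then 1 else 0)"
  define d where "d a = (if a = ty then c - w else 0)" for a
  define e :: "bool \<Rightarrow> nat \<Rightarrow> real"
    where "e b v = (if b = ty then (if Suc (outdeg t v) = k then 1 else 0) - (if outdeg t v = k then 1 else 0) else 0)"
    for b v
  define f where "f a = 2 * D * d a" for a
  define g where "g v = 2 * D * e ty v" for v
  have step_le: "(outdeg_discrepancy p q ty k (t @ [(a, v)]))\<^sup>2 \<le> D\<^sup>2 + 4 + f a + (if b = ty then g v else 0)"
    if v: "v \<in> verts_of_type t b" for a b v
  proof -
    have "\<bar>d a + e b v\<bar> \<le> 2"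
      unfolding d_def e_def c_def w_def using limit_weight_bounds[of ty k] by auto
    then show ?thesis
      using power2_add_le[of "d a + e b v" 2 D] outdeg_discrepancy_snoc[OF wf v]
      unfolding f_def g_def D_def d_def e_def c_def w_def by (auto simp: algebra_simps)
  qed
  have "(\<Sum>v\<in>verts_of_type t ty. e ty v)
      = count_type t ty (\<lambda>d. Suc d = k) - count_type t ty (\<lambda>d. d = k)"
    using sum_verts_of_type_indicator[where P = "\<lambda>d. Suc d = k"] sum_verts_of_type_indicator[where P = "\<lambda>d. d = k"]
    by (simp add: e_def sum_subtractf)
  then have sum_g: "(\<Sum>v\<in>verts_of_type t ty. g v)
      = 2 * D * (count_type t ty (\<lambda>d. Suc d = k) - count_type t ty (\<lambda>d. d = k))"
    by (simp add: g_def sum_distrib_left[symmetric])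
  have sum_f: "type_prob p True * f True + type_prob p False * f False = 2 * D * (type_prob p ty * (c - w))"
    unfolding f_def d_def by (cases ty) (auto simp: algebra_simps)
  have drift: "2 * D * (type_prob p ty * (c - w) + attach_prob p q ty
      * ((count_type t ty (\<lambda>d. Suc d = k) - count_type t ty (\<lambda>d. d = k)) / count_type t ty (\<lambda>_. True)))
     \<le> (if k = 0 then 0 else \<bar>outdeg_discrepancy p q ty (k - 1) t\<bar>)"
    unfolding D_def c_def w_def by (rule outdeg_discrepancy_drift_le[OF wf])
  have "measure_pmf.expectation (cmrt_step p q t) (\<lambda>t'. (outdeg_discrepancy p q ty k t')\<^sup>2)
      \<le> D\<^sup>2 + 4 + (type_prob p True * f True + type_prob p False * f False)
         + attach_prob p q ty * ((\<Sum>v\<in>verts_of_type t ty. g v) / card (verts_of_type t ty))"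
    by (rule expectation_cmrt_step_le[OF wf]) (rule step_le)
  then show ?thesis
    using drift unfolding sum_g sum_f card_verts_of_type D_def
    by (simp add: algebra_simps)
qed

lemma expectation_type_discrepancy_sq_step:
  assumes wf: "cmrt_tree_wf t"
  shows "measure_pmf.expectation (cmrt_step p q t) (\<lambda>t'. (type_discrepancy p ty t')\<^sup>2)
    \<le> (type_discrepancy p ty t)\<^sup>2 + 1"
proof -
  define E where "E = type_discrepancy p ty t"
  define f where "f a = 2 * E * ((if a = ty then 1 else 0) - type_prob p ty)" for a
  have step_le: "(type_discrepancy p ty (t @ [(a, v)]))\<^sup>2 \<le> E\<^sup>2 + 1 + f a"
    if v: "v \<in> verts_of_type t b" for a b v
  proof -
    have "v \<in> {1..length t}"
      using v unfolding verts_of_type_def by auto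
    then have "type_discrepancy p ty (t @ [(a, v)]) = E + ((if a = ty then 1 else 0) - type_prob p ty)"
      unfolding E_def by (rule type_discrepancy_snoc[OF wf])
    moreover have "\<bar>(if a = ty then 1 else 0) - type_prob p ty\<bar> \<le> 1"
      using type_prob_bounds[of ty] by auto
    ultimately show ?thesis
      using power2_add_le[of _ 1 E] unfolding f_def by simp
  qed
  have "measure_pmf.expectation (cmrt_step p q t) (\<lambda>t'. (type_discrepancy p ty t')\<^sup>2)
      \<le> E\<^sup>2 + 1 + (type_prob p True * f True + type_prob p False * f False)
         + attach_prob p q ty * ((\<Sum>v\<in>verts_of_type t ty. 0) / card (verts_of_type t ty))"
    by (rule expectation_cmrt_step_le[OF wf]) (simp add: step_le)
  moreover have "type_prob p True * f True + type_prob p False * f False = 0"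
    unfolding f_def type_prob_def by (cases ty) (auto simp: algebra_simps)
  ultimately show ?thesis
    by (simp add: E_def)
qed

lemma expectation_cmrt_aux_Suc_le:
  fixes f g :: "cmrt_tree \<Rightarrow> real"
  assumes "\<And>t. cmrt_tree_wf t \<Longrightarrow> measure_pmf.expectation (cmrt_step p q t) f \<le> g t"
  shows "measure_pmf.expectation (cmrt_aux p q (Suc m)) f \<le> measure_pmf.expectation (cmrt_aux p q m) g"
  using assms finite_set_pmf_cmrt_aux[of p q m] cmrt_aux_wf_length[of _ p q m]
  by (auto intro!: expectation_bind_pmf_le finite_set_pmf_cmrt_step)

lemma expectation_type_discrepancy_sq_small:
  assumes "0 < \<epsilon>"
  shows "eventually (\<lambda>m. measure_pmf.expectation (cmrt_aux p q m) (\<lambda>t. (type_discrepancy p ty t)\<^sup>2)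
    \<le> \<epsilon> * (real m)\<^sup>2) sequentially"
proof (rule eventually_le_mult_sq_of_increments[OF _ _ assms])
  show "measure_pmf.expectation (cmrt_aux p q (Suc m)) (\<lambda>t. (type_discrepancy p ty t)\<^sup>2)
      \<le> measure_pmf.expectation (cmrt_aux p q m) (\<lambda>t. (type_discrepancy p ty t)\<^sup>2) + 1" for m
    using expectation_cmrt_aux_Suc_le[OF expectation_type_discrepancy_sq_step]
    by (simp add: integrable_cmrt_aux)
qed (rule eventually_le_mult_real)

lemma expectation_outdeg_discrepancy_sq_small:
  assumes "0 < \<epsilon>"
  shows "eventually (\<lambda>m. measure_pmf.expectation (cmrt_aux p q m) (\<lambda>t. (outdeg_discrepancy p q ty k t)\<^sup>2)
    \<le> \<epsilon> * (real m)\<^sup>2) sequentially"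
  using assms
proof (induction k arbitrary: \<epsilon>)
  case 0
  show ?case
  proof (rule eventually_le_mult_sq_of_increments[OF _ _ "0.prems"])
    show "measure_pmf.expectation (cmrt_aux p q (Suc m)) (\<lambda>t. (outdeg_discrepancy p q ty 0 t)\<^sup>2)
        \<le> measure_pmf.expectation (cmrt_aux p q m) (\<lambda>t. (outdeg_discrepancy p q ty 0 t)\<^sup>2) + 4" for m
      using expectation_cmrt_aux_Suc_le[OF expectation_outdeg_discrepancy_sq_step[where k = 0]]
      by (simp add: integrable_cmrt_aux)
  qed (rule eventually_le_mult_real)
next
  case (Suc j)
  show ?case
  proof (rule eventually_le_mult_sq_of_increments[OF _ _ Suc.prems])
    show "measure_pmf.expectation (cmrt_aux p q (Suc m)) (\<lambda>t. (outdeg_discrepancy p q ty (Suc j) t)\<^sup>2)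
        \<le> measure_pmf.expectation (cmrt_aux p q m) (\<lambda>t. (outdeg_discrepancy p q ty (Suc j) t)\<^sup>2)
          + (4 + measure_pmf.expectation (cmrt_aux p q m) (\<lambda>t. \<bar>outdeg_discrepancy p q ty j t\<bar>))" for m
      using expectation_cmrt_aux_Suc_le[OF expectation_outdeg_discrepancy_sq_step[where k = "Suc j"]]
      by (simp add: integrable_cmrt_aux add.assoc)
    fix \<epsilon> :: real
    assume "0 < \<epsilon>"
    then have "eventually (\<lambda>m. 4 \<le> \<epsilon> / 2 * real m) sequentially"
      by (intro eventually_le_mult_real) simp
    moreover have "eventually (\<lambda>m. measure_pmf.expectation (cmrt_aux p q m)
        (\<lambda>t. \<bar>outdeg_discrepancy p q ty j t\<bar>) \<le> \<epsilon> / 2 * real m) sequentially"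
      using \<open>0 < \<epsilon>\<close> finite_set_pmf_cmrt_aux
      by (intro eventually_expectation_abs_le Suc.IH) auto
    ultimately show "eventually (\<lambda>m. 4 + measure_pmf.expectation (cmrt_aux p q m)
        (\<lambda>t. \<bar>outdeg_discrepancy p q ty j t\<bar>) \<le> \<epsilon> * real m) sequentially"
      by eventually_elim simp
  qed
qed

end

section \<open>Convergence of the degree proportions\<close>

lemma pk_eq_limit_weights:
  assumes "0 < p" "p \<le> 1" "0 \<le> q" "q \<le> 1"
  shows "pk p q k = type_prob p True * limit_weight p q True k + type_prob p False * limit_weight p q False k"
proof -
  have geometric: "\<pi> / (1 + \<gamma> / \<pi>) * (\<gamma> / \<pi> / (1 + \<gamma> / \<pi>)) ^ k
      = \<pi> * (\<pi> / (\<pi> + \<gamma>) * (\<gamma> / (\<pi> + \<gamma>)) ^ k)"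
    if "0 < \<pi>" "0 \<le> \<gamma>" for \<pi> \<gamma> :: real
    using that by (simp add: field_simps)
  have "rA p q = attach_prob p q True / type_prob p True"
    using assms by (simp add: rA_def attach_prob_def type_prob_def field_simps)
  moreover have "rB p q = attach_prob p q False / type_prob p False" if "p \<noteq> 1"
    using assms that by (simp add: rB_def attach_prob_def type_prob_def field_simps)
  ultimately show ?thesis
    using assms geometric[of "type_prob p True" "attach_prob p q True"]
      geometric[of "type_prob p False" "attach_prob p q False"] attach_prob_bounds
    by (auto simp: pk_def limit_weight_def type_prob_def)
qed

lemma Ndeg_deviation_eq:
  assumes "0 < p" "p \<le> 1" "0 \<le> q" "q \<le> 1"
  shows "real (Ndeg t k) - pk p q k * real (length t) =
    outdeg_discrepancy p q True k t + outdeg_discrepancy p q False k t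
    + limit_weight p q True k * type_discrepancy p True t + limit_weight p q False k * type_discrepancy p False t"
  unfolding pk_eq_limit_weights[OF assms] Ndeg_eq_count_type outdeg_discrepancy_def type_discrepancy_def
    length_eq_count_type
  by (simp add: type_prob_def algebra_simps)

lemma Ndeg_deviation_sq_le:
  assumes "0 < p" "p \<le> 1" "0 \<le> q" "q \<le> 1"
  shows "(real (Ndeg t k) - pk p q k * real (length t))\<^sup>2 \<le>
    4 * ((outdeg_discrepancy p q True k t)\<^sup>2 + (outdeg_discrepancy p q False k t)\<^sup>2
      + (type_discrepancy p True t)\<^sup>2 + (type_discrepancy p False t)\<^sup>2)"
proof -
  have weighted_le: "(limit_weight p q ty k * x)\<^sup>2 \<le> x\<^sup>2" for ty x
  proof -
    have "(limit_weight p q ty k)\<^sup>2 \<le> 1"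
      using limit_weight_bounds[of p q ty k] assms by (simp add: abs_square_le_1)
    then show ?thesis
      by (simp add: power_mult_distrib mult_left_le_one_le)
  qed
  show ?thesis
    unfolding Ndeg_deviation_eq[OF assms]
    by (rule order_trans[OF power2_sum4_le])
      (intro mult_left_mono add_mono order_refl weighted_le; simp)
qed

lemma expectation_Ndeg_deviation_sq_small:
  assumes pq: "0 < p" "p \<le> 1" "0 \<le> q" "q \<le> 1" and "0 < \<eta>"
  shows "eventually (\<lambda>n. measure_pmf.expectation (cmrt p q n) (\<lambda>t. (real (Ndeg t k) - pk p q k * real n)\<^sup>2)
    \<le> \<eta> * (real n)\<^sup>2) sequentially"
proof -
  let ?E = "\<lambda>m f. measure_pmf.expectation (cmrt_aux p q m) f"
  have "0 \<le> p" and "0 < \<eta> / 16"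
    using assms by simp_all
  note outdeg_small = expectation_outdeg_discrepancy_sq_small[OF \<open>0 \<le> p\<close> pq(2-4) \<open>0 < \<eta> / 16\<close>]
  note type_small = expectation_type_discrepancy_sq_small[OF \<open>0 \<le> p\<close> pq(2-4) \<open>0 < \<eta> / 16\<close>]
  have "eventually (\<lambda>m. ?E m (\<lambda>t. (real (Ndeg t k) - pk p q k * real (m + 2))\<^sup>2)
      \<le> \<eta> * (real (m + 2))\<^sup>2) sequentially"
    using outdeg_small[of True k] outdeg_small[of False k] type_small[of True] type_small[of False]
  proof eventually_elim
    case (elim m)
    have "?E m (\<lambda>t. (real (Ndeg t k) - pk p q k * real (m + 2))\<^sup>2)
        = ?E m (\<lambda>t. (real (Ndeg t k) - pk p q k * real (length t))\<^sup>2)"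
      by (intro integral_cong_AE) (auto simp: AE_measure_pmf_iff cmrt_aux_wf_length)
    also have "\<dots> \<le> ?E m (\<lambda>t. 4 * ((outdeg_discrepancy p q True k t)\<^sup>2 + (outdeg_discrepancy p q False k t)\<^sup>2
        + (type_discrepancy p True t)\<^sup>2 + (type_discrepancy p False t)\<^sup>2))"
      by (intro integral_mono Ndeg_deviation_sq_le[OF pq] integrable_cmrt_aux)
    also have "\<dots> \<le> \<eta> * (real m)\<^sup>2"
      using elim by (simp add: integrable_cmrt_aux)
    also have "\<dots> \<le> \<eta> * (real (m + 2))\<^sup>2"
      using \<open>0 < \<eta>\<close> by (intro mult_left_mono power_mono) auto
    finally show ?case .
  qed
  then have "eventually (\<lambda>m. measure_pmf.expectation (cmrt p q (m + 2))
      (\<lambda>t. (real (Ndeg t k) - pk p q k * real (m + 2))\<^sup>2) \<le> \<eta> * (real (m + 2))\<^sup>2) sequentially"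
    by (simp add: cmrt_def)
  then show ?thesis
    by (rule eventually_sequentially_seg[THEN iffD1])
qed

theorem theorem3p1:
  fixes p q :: real and k :: nat
  assumes "0 < p" "p \<le> 1" "0 \<le> q" "q \<le> 1"
  shows "\<forall>\<epsilon>>0. ((\<lambda>n. measure_pmf.prob (cmrt p q n)
            {t. \<bar>real (Ndeg t k) / real n - pk p q k\<bar> > \<epsilon>}) \<longlongrightarrow> 0) at_top"
proof (intro allI impI)
  fix \<epsilon> :: real
  assume "\<epsilon> > 0"
  show "((\<lambda>n. measure_pmf.prob (cmrt p q n)
      {t. \<bar>real (Ndeg t k) / real n - pk p q k\<bar> > \<epsilon>}) \<longlongrightarrow> 0) at_top"
  proof (rule tendsto_prob_deviation_zero[OF _ _ \<open>\<epsilon> > 0\<close>])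
    show "integrable (cmrt p q n) (\<lambda>t. (real (Ndeg t k) - pk p q k * real n)\<^sup>2)" for n
      by (simp add: cmrt_def integrable_cmrt_aux)
  qed (rule expectation_Ndeg_deviation_sq_small[OF assms])
qed

end
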